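(* Let $P\subseteq[0,k]^n$ be a lattice polytope, let $\sigma:[n]\to\pm[n]$ be a signed permutation, let $\alpha\ge 2k+1$ and $\mathbf{x}_\sigma=(\operatorname{sign}(\sigma(1))\alpha^{|\sigma(1)|},\dots,\operatorname{sign}(\sigma(n))\alpha^{|\sigma(n)|})$. Define a flag of faces $G_n\supseteq G_{n-1}\supseteq\dots\supseteq G_0$ by $G_n=P$ and, for $i=n,\dots,1$, $G_{i-1}$ is the face of $G_i$ on which $\mathbf{e}_{\sigma^{-1}(i)}^{\intercal}\mathbf{x}$ is maximized. Then $G_0$ is a single vertex, and it is the unique vertex of $P$ maximizing $\mathbf{x}_\sigma^{\intercal}\mathbf{x}$.
   Context: A signed permutation $\sigma:[n]\to\pm[n]$ is a map such that $i\mapsto|\sigma(i)|$ is a permutation of $[n]$. For $j\in[n]$, $\sigma^{-1}(j)$ denotes the signed index $\operatorname{sign}(\sigma(i))\,i$ where $|\sigma(i)|=j$, and $\mathbf{e}_{-i}:=-\mathbf{e}_i$, with $\mathbf{e}_i$ the standard basis vectors. A lattice polytope has integer vertices. *)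

theory Defs
  imports "HOL-Analysis.Analysis"
begin

text \<open>The coordinate set [n] is the finite index type 'n (n = CARD('n)).
  A signed permutation is a map sigma from indices to nonzero integers such that
  i |-> |sigma i| is a bijection onto {1..n}.\<close>
definition signed_perm :: "('n::finite \<Rightarrow> int) \<Rightarrow> bool" where
  "signed_perm \<sigma> \<longleftrightarrow> bij_betw (\<lambda>i. nat \<bar>\<sigma> i\<bar>) UNIV {1..CARD('n)}"

text \<open>e_{sigma^{-1}(j)} = sign(sigma i) e_i where |sigma i| = j.\<close>
definition signed_inv_basis :: "('n::finite \<Rightarrow> int) \<Rightarrow> nat \<Rightarrow> real^'n" where
  "signed_inv_basis \<sigma> j =
     (let i = (THE i. nat \<bar>\<sigma> i\<bar> = j) in of_int (sgn (\<sigma> i)) *\<^sub>R axis i 1)"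

definition x_sigma :: "real \<Rightarrow> ('n::finite \<Rightarrow> int) \<Rightarrow> real^'n" where
  "x_sigma \<alpha> \<sigma> = (\<chi> i. of_int (sgn (\<sigma> i)) * \<alpha> ^ nat \<bar>\<sigma> i\<bar>)"

definition max_face :: "(real^'n::finite) set \<Rightarrow> real^'n \<Rightarrow> (real^'n) set" where
  "max_face S c = {x \<in> S. \<forall>y\<in>S. c \<bullet> y \<le> c \<bullet> x}"

definition lattice_polytope :: "(real^'n::finite) set \<Rightarrow> bool" where
  "lattice_polytope P \<longleftrightarrow> polytope P \<and>
     (\<forall>v. v extreme_point_of P \<longrightarrow> (\<forall>i. v $ i \<in> \<int>))"

end

theory Submission
  imports Defs
begin

text \<open>Writing e_j for the signed basis vector e_{sigma^-1(j)}, the flag maximises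
  e_n, ..., e_1 in turn, so G 0 consists of the lexicographically largest points of P for
  these functionals. They determine every coordinate, hence G 0 is a single vertex v.
  For another vertex u let j be the largest index with e_j u \<noteq> e_j v; then e_j u < e_j v.
  Now x_sigma (v - u) = \<Sum>_l \<alpha>^l g_l, where the g_l = e_l (v - u) are integers with
  |g_l| \<le> k, g_l = 0 for l > j and g_j \<ge> 1, and \<alpha> \<ge> 2k + 1 makes \<alpha>^j g_j outweigh
  all lower terms.\<close>

lemma geometric_sum_less_power:
  fixes \<alpha> k :: real
  assumes "0 \<le> k" "2 * k + 1 \<le> \<alpha>"
  shows "k * (\<Sum>l\<in>{1..<j}. \<alpha> ^ l) < \<alpha> ^ j"
proof (induction j)
  case 0
  then show ?case by simp
next
  case (Suc j)
  have "1 + k \<le> \<alpha>" "0 < \<alpha> ^ j"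
    using assms by simp_all
  have "k * (\<Sum>l\<in>{1..<Suc j}. \<alpha> ^ l) \<le> k * (\<Sum>l\<in>{1..<j}. \<alpha> ^ l) + k * \<alpha> ^ j"
    using assms(1) \<open>0 < \<alpha> ^ j\<close> by (cases "j = 0") (auto simp: algebra_simps)
  also have "\<dots> < (1 + k) * \<alpha> ^ j"
    using Suc.IH by (simp add: algebra_simps)
  also have "\<dots> \<le> \<alpha> * \<alpha> ^ j"
    using \<open>1 + k \<le> \<alpha>\<close> \<open>0 < \<alpha> ^ j\<close> by (intro mult_right_mono) auto
  finally show ?case by simp
qed

lemma power_weighted_sum_pos:
  fixes g :: "nat \<Rightarrow> real" and \<alpha> k :: real
  assumes "0 \<le> k" "2 * k + 1 \<le> \<alpha>" "j \<in> {1..n}" "1 \<le> g j"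
    and "\<forall>l\<in>{1..<j}. \<bar>g l\<bar> \<le> k" and "\<forall>l\<in>{j<..n}. g l = 0"
  shows "0 < (\<Sum>l=1..n. \<alpha> ^ l * g l)"
proof -
  have "0 < \<alpha>" using assms(1,2) by linarith
  have "{1..n} = {1..<j} \<union> ({j} \<union> {j<..n})" using assms(3) by auto
  then have "(\<Sum>l=1..n. \<alpha> ^ l * g l) =
      (\<Sum>l\<in>{1..<j}. \<alpha> ^ l * g l) + (\<alpha> ^ j * g j + (\<Sum>l\<in>{j<..n}. \<alpha> ^ l * g l))"
    by (simp only:) (subst sum.union_disjoint; auto)
  also have "(\<Sum>l\<in>{j<..n}. \<alpha> ^ l * g l) = 0"
    using assms(6) by simp
  also have "- (k * (\<Sum>l\<in>{1..<j}. \<alpha> ^ l)) \<le> (\<Sum>l\<in>{1..<j}. \<alpha> ^ l * g l)"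
  proof -
    have "- (k * \<alpha> ^ l) \<le> \<alpha> ^ l * g l" if "l \<in> {1..<j}" for l
    proof -
      have "- k \<le> g l"
        using assms(5) that by force
      then show ?thesis
        using mult_left_mono[of "- k" "g l" "\<alpha> ^ l"] \<open>0 < \<alpha>\<close> by (simp add: mult.commute)
    qed
    then have "(\<Sum>l\<in>{1..<j}. - (k * \<alpha> ^ l)) \<le> (\<Sum>l\<in>{1..<j}. \<alpha> ^ l * g l)"
      by (rule sum_mono)
    then show ?thesis
      by (simp add: sum_distrib_left sum_negf)
  qed
  moreover have "k * (\<Sum>l\<in>{1..<j}. \<alpha> ^ l) < \<alpha> ^ j"
    using geometric_sum_less_power assms(1,2) by blast
  moreover have "\<alpha> ^ j \<le> \<alpha> ^ j * g j"
    using assms(4) \<open>0 < \<alpha>\<close> by simp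
  ultimately show ?thesis by linarith
qed

lemma max_face_subset: "max_face S c \<subseteq> S"
  by (auto simp: max_face_def)

lemma max_face_face_of:
  assumes "compact S" "convex S" "S \<noteq> {}"
  shows "max_face S c face_of S \<and> max_face S c \<noteq> {}"
proof -
  have "continuous_on S (inner c)"
    by (intro continuous_intros)
  then obtain x where x: "x \<in> S" "\<forall>y\<in>S. c \<bullet> y \<le> c \<bullet> x"
    using continuous_attains_sup[OF assms(1,3)] by blast
  then have "max_face S c = S \<inter> {y. c \<bullet> y = c \<bullet> x}"
    by (auto simp: max_face_def intro: antisym)
  then show ?thesis
    using face_of_Int_supporting_hyperplane_le[OF assms(2), of c "c \<bullet> x"] x by auto
qed

lemma flag_face_of:
  fixes G :: "nat \<Rightarrow> (real^'n::finite) set" and n :: nat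
  assumes "compact P" "convex P" "P \<noteq> {}" "G n = P"
    and "\<forall>i\<in>{1..n}. G (i - 1) = max_face (G i) (c i)" and "i \<le> n"
  shows "G i face_of P \<and> G i \<noteq> {}"
  using \<open>i \<le> n\<close>
proof (induction i rule: inc_induct)
  case base
  then show ?case
    using assms(2-4) face_of_refl by auto
next
  case (step m)
  then have "G m = max_face (G (Suc m)) (c (Suc m))"
    using assms(5) by force
  moreover have "compact (G (Suc m))" "convex (G (Suc m))"
    using step.IH assms(1,2) face_of_imp_compact face_of_imp_convex by blast+
  ultimately show ?case
    using max_face_face_of step.IH face_of_trans by metis
qed

lemma flag_mono:
  fixes G :: "nat \<Rightarrow> (real^'n::finite) set" and n :: nat
  assumes "\<forall>i\<in>{1..n}. G (i - 1) = max_face (G i) (c i)" and "i \<le> j" "j \<le> n"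
  shows "G i \<subseteq> G j"
  using \<open>i \<le> j\<close> \<open>j \<le> n\<close>
proof (induction j rule: dec_induct)
  case (step m)
  then have "G m \<subseteq> G (Suc m)"
    using assms(1) max_face_subset by force
  with step show ?case by simp
qed simp

lemma flag_bottom_max:
  fixes G :: "nat \<Rightarrow> (real^'n::finite) set" and n :: nat
  assumes "\<forall>i\<in>{1..n}. G (i - 1) = max_face (G i) (c i)"
    and "j \<in> {1..n}" "x \<in> G 0" "y \<in> G j"
  shows "c j \<bullet> y \<le> c j \<bullet> x"
proof -
  have "j - 1 \<le> n"
    using assms(2) by auto
  then have "G 0 \<subseteq> G (j - 1)"
    using flag_mono[OF assms(1) le0] by blast
  then show ?thesis
    using assms by (auto simp: max_face_def)
qed

lemma flag_bottom_inner_eq: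
  fixes G :: "nat \<Rightarrow> (real^'n::finite) set" and n :: nat
  assumes "\<forall>i\<in>{1..n}. G (i - 1) = max_face (G i) (c i)"
    and "j \<in> {1..n}" "x \<in> G 0" "y \<in> G 0"
  shows "c j \<bullet> x = c j \<bullet> y"
proof -
  have "G 0 \<subseteq> G j"
    using flag_mono[OF assms(1)] assms(2) by simp
  then show ?thesis
    using flag_bottom_max[OF assms(1,2)] assms(3,4) by (meson antisym subsetD)
qed

lemma flag_mem_if_top_inner_eq:
  fixes G :: "nat \<Rightarrow> (real^'n::finite) set" and n :: nat
  assumes "G n = P" "\<forall>i\<in>{1..n}. G (i - 1) = max_face (G i) (c i)"
    and "u \<in> P" "v \<in> G 0" "j \<le> n" "\<forall>l\<in>{j<..n}. c l \<bullet> u = c l \<bullet> v"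
  shows "u \<in> G j"
  using \<open>j \<le> n\<close> \<open>\<forall>l\<in>{j<..n}. c l \<bullet> u = c l \<bullet> v\<close>
proof (induction j rule: inc_induct)
  case base
  then show ?case using assms(1,3) by simp
next
  case (step m)
  then have "u \<in> G (Suc m)" "c (Suc m) \<bullet> u = c (Suc m) \<bullet> v"
    by auto
  moreover have "\<forall>y\<in>G (Suc m). c (Suc m) \<bullet> y \<le> c (Suc m) \<bullet> v"
    using flag_bottom_max[OF assms(2) _ assms(4)] step.hyps by auto
  moreover have "G m = max_face (G (Suc m)) (c (Suc m))"
    using assms(2) step.hyps by force
  ultimately show ?case
    by (simp add: max_face_def)
qed

lemma flag_bottom_lex_max:
  fixes G :: "nat \<Rightarrow> (real^'n::finite) set" and n :: nat
  assumes "G n = P" "\<forall>i\<in>{1..n}. G (i - 1) = max_face (G i) (c i)"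
    and "u \<in> P" "v \<in> G 0" "\<exists>j\<in>{1..n}. c j \<bullet> u \<noteq> c j \<bullet> v"
  obtains j where "j \<in> {1..n}" "c j \<bullet> u < c j \<bullet> v" "\<forall>l\<in>{j<..n}. c l \<bullet> u = c l \<bullet> v"
proof -
  define D where "D = {j\<in>{1..n}. c j \<bullet> u \<noteq> c j \<bullet> v}"
  define j where "j = Max D"
  have "finite D" "D \<noteq> {}"
    using assms(5) by (auto simp: D_def)
  then have j: "j \<in> {1..n}" "c j \<bullet> u \<noteq> c j \<bullet> v" and "\<forall>l\<in>D. l \<le> j"
    using Max_in[of D] Max_ge[of D] by (auto simp: D_def j_def)
  have above: "\<forall>l\<in>{j<..n}. c l \<bullet> u = c l \<bullet> v"
  proof
    fix l
    assume "l \<in> {j<..n}"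
    then have "l \<notin> D" "l \<in> {1..n}"
      using \<open>\<forall>l\<in>D. l \<le> j\<close> j(1) by auto
    then show "c l \<bullet> u = c l \<bullet> v"
      by (simp add: D_def)
  qed
  then have "u \<in> G j"
    using flag_mem_if_top_inner_eq[OF assms(1-4)] j(1) by auto
  then have "c j \<bullet> u \<le> c j \<bullet> v"
    using flag_bottom_max[OF assms(2) j(1) assms(4)] by blast
  with j above that show ?thesis by force
qed

lemma signed_perm_bij: "signed_perm \<sigma> \<Longrightarrow> bij_betw (\<lambda>i. nat \<bar>\<sigma> i\<bar>) UNIV {1..CARD('n)}"
  for \<sigma> :: "'n::finite \<Rightarrow> int"
  by (simp add: signed_perm_def)

lemma signed_perm_range:
  fixes \<sigma> :: "'n::finite \<Rightarrow> int"
  assumes "signed_perm \<sigma>"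
  shows "nat \<bar>\<sigma> i\<bar> \<in> {1..CARD('n)}"
  using bij_betw_apply[OF signed_perm_bij[OF assms] UNIV_I] .

lemma signed_perm_nonzero:
  assumes "signed_perm \<sigma>"
  shows "\<sigma> i \<noteq> 0"
proof
  assume "\<sigma> i = 0"
  then show False
    using signed_perm_range[OF assms, of i] by simp
qed

lemma signed_perm_surj:
  fixes \<sigma> :: "'n::finite \<Rightarrow> int"
  assumes "signed_perm \<sigma>" "j \<in> {1..CARD('n)}"
  obtains i where "nat \<bar>\<sigma> i\<bar> = j"
proof -
  have "j \<in> range (\<lambda>i. nat \<bar>\<sigma> i\<bar>)"
    using bij_betw_imp_surj_on[OF signed_perm_bij[OF assms(1)]] assms(2) by simp
  with that show ?thesis
    by blast
qed

lemma signed_inv_basis_at: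
  assumes "signed_perm \<sigma>"
  shows "signed_inv_basis \<sigma> (nat \<bar>\<sigma> i\<bar>) = of_int (sgn (\<sigma> i)) *\<^sub>R axis i 1"
proof -
  have "inj (\<lambda>i. nat \<bar>\<sigma> i\<bar>)"
    using signed_perm_bij[OF assms] by (simp add: bij_betw_def)
  then have "(THE i'. nat \<bar>\<sigma> i'\<bar> = nat \<bar>\<sigma> i\<bar>) = i"
    by (auto dest: injD)
  then show ?thesis
    by (simp add: signed_inv_basis_def)
qed

lemma signed_inv_basis_inner:
  assumes "signed_perm \<sigma>"
  shows "signed_inv_basis \<sigma> (nat \<bar>\<sigma> i\<bar>) \<bullet> x = of_int (sgn (\<sigma> i)) * x $ i"
  by (simp add: signed_inv_basis_at[OF assms] inner_axis')

lemma signed_inv_basis_inner_eq_imp_eq: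
  fixes x y :: "real^'n"
  assumes "signed_perm \<sigma>"
    and "\<forall>j\<in>{1..CARD('n)}. signed_inv_basis \<sigma> j \<bullet> x = signed_inv_basis \<sigma> j \<bullet> y"
  shows "x = y"
proof (rule vec_eq_iff[THEN iffD2], rule allI)
  fix i
  have "of_int (sgn (\<sigma> i)) * x $ i = of_int (sgn (\<sigma> i)) * y $ i"
    using assms(2) signed_perm_range[OF assms(1)] by (simp flip: signed_inv_basis_inner[OF assms(1)])
  then show "x $ i = y $ i"
    using signed_perm_nonzero[OF assms(1), of i] by (simp add: sgn_0_0)
qed

lemma x_sigma_inner:
  fixes y :: "real^'n"
  assumes "signed_perm \<sigma>"
  shows "x_sigma \<alpha> \<sigma> \<bullet> y = (\<Sum>l=1..CARD('n). \<alpha> ^ l * (signed_inv_basis \<sigma> l \<bullet> y))"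
proof -
  have "x_sigma \<alpha> \<sigma> \<bullet> y = (\<Sum>i\<in>UNIV. \<alpha> ^ nat \<bar>\<sigma> i\<bar> * (of_int (sgn (\<sigma> i)) * y $ i))"
    by (simp add: inner_vec_def x_sigma_def algebra_simps)
  also have "\<dots> = (\<Sum>i\<in>UNIV. \<alpha> ^ nat \<bar>\<sigma> i\<bar> * (signed_inv_basis \<sigma> (nat \<bar>\<sigma> i\<bar>) \<bullet> y))"
    by (simp add: signed_inv_basis_inner[OF assms])
  also have "\<dots> = (\<Sum>l=1..CARD('n). \<alpha> ^ l * (signed_inv_basis \<sigma> l \<bullet> y))"
    using sum.reindex_bij_betw[OF signed_perm_bij[OF assms]] by simp
  finally show ?thesis .
qed

lemma x_sigma_inner_less_if_lex_less:
  fixes u v :: "real^'n"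
  assumes "signed_perm \<sigma>" "2 * k + 1 \<le> \<alpha>"
    and "\<forall>i. u $ i \<in> \<int> \<and> v $ i \<in> \<int>"
    and "\<forall>i. 0 \<le> u $ i \<and> u $ i \<le> k \<and> 0 \<le> v $ i \<and> v $ i \<le> k"
    and "j \<in> {1..CARD('n)}"
    and "signed_inv_basis \<sigma> j \<bullet> u < signed_inv_basis \<sigma> j \<bullet> v"
    and "\<forall>l\<in>{j<..CARD('n)}. signed_inv_basis \<sigma> l \<bullet> u = signed_inv_basis \<sigma> l \<bullet> v"
  shows "x_sigma \<alpha> \<sigma> \<bullet> u < x_sigma \<alpha> \<sigma> \<bullet> v"
proof -
  define g where "g l = signed_inv_basis \<sigma> l \<bullet> v - signed_inv_basis \<sigma> l \<bullet> u" for l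
  have g_int_bounded: "g l \<in> \<int> \<and> \<bar>g l\<bar> \<le> k" if l: "l \<in> {1..CARD('n)}" for l
  proof -
    obtain i where "nat \<bar>\<sigma> i\<bar> = l"
      using signed_perm_surj[OF assms(1) l] .
    then have "g l = of_int (sgn (\<sigma> i)) * (v $ i - u $ i)"
      by (auto simp: g_def signed_inv_basis_inner[OF assms(1)] algebra_simps)
    moreover have "\<bar>v $ i - u $ i\<bar> \<le> k"
      using assms(4)[rule_format, of i] by linarith
    moreover have "\<bar>of_int (sgn (\<sigma> i)) :: real\<bar> = 1"
      using signed_perm_nonzero[OF assms(1)] by (simp add: sgn_if)
    ultimately show ?thesis
      using assms(3) by (auto simp: abs_mult)
  qed
  have "0 < g j" "g j \<in> \<int>"
    using assms(5,6) g_int_bounded by (auto simp: g_def)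
  then have "1 \<le> g j"
    by (metis Ints_cases of_int_0_less_iff of_int_1_le_iff int_one_le_iff_zero_less)
  moreover have "0 \<le> k"
    using assms(4)[rule_format, of undefined] by linarith
  ultimately have "0 < (\<Sum>l=1..CARD('n). \<alpha> ^ l * g l)"
    using power_weighted_sum_pos[OF _ assms(2,5)] g_int_bounded assms(5,7) by (auto simp: g_def)
  then show ?thesis
    by (simp add: x_sigma_inner[OF assms(1)] g_def algebra_simps sum_subtractf)
qed

lemma flag_bottom_x_sigma_less:
  fixes G :: "nat \<Rightarrow> (real^'n) set"
  assumes "signed_perm \<sigma>" "2 * k + 1 \<le> \<alpha>" "G CARD('n) = P"
    and "\<forall>i\<in>{1..CARD('n)}. G (i - 1) = max_face (G i) (signed_inv_basis \<sigma> i)"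
    and "u \<in> P" "v \<in> G 0" "u \<noteq> v"
    and "\<forall>i. u $ i \<in> \<int> \<and> v $ i \<in> \<int>"
    and "\<forall>i. 0 \<le> u $ i \<and> u $ i \<le> k \<and> 0 \<le> v $ i \<and> v $ i \<le> k"
  shows "x_sigma \<alpha> \<sigma> \<bullet> u < x_sigma \<alpha> \<sigma> \<bullet> v"
proof -
  have "\<exists>j\<in>{1..CARD('n)}. signed_inv_basis \<sigma> j \<bullet> u \<noteq> signed_inv_basis \<sigma> j \<bullet> v"
    using signed_inv_basis_inner_eq_imp_eq[OF assms(1)] assms(7) by blast
  then obtain j where "j \<in> {1..CARD('n)}"
    "signed_inv_basis \<sigma> j \<bullet> u < signed_inv_basis \<sigma> j \<bullet> v"
    "\<forall>l\<in>{j<..CARD('n)}. signed_inv_basis \<sigma> l \<bullet> u = signed_inv_basis \<sigma> l \<bullet> v"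
    by (rule flag_bottom_lex_max[OF assms(3-6)])
  then show ?thesis
    using x_sigma_inner_less_if_lex_less[OF assms(1,2,8,9)] by blast
qed

theorem mainTheorem10:
  fixes P :: "(real^'n) set" and k \<alpha> :: real and \<sigma> :: "'n \<Rightarrow> int"
    and G :: "nat \<Rightarrow> (real^'n) set"
  assumes "lattice_polytope P" and "P \<noteq> {}"
    and "\<forall>x\<in>P. \<forall>i. 0 \<le> x $ i \<and> x $ i \<le> k"
    and "signed_perm \<sigma>"
    and "\<alpha> \<ge> 2 * k + 1"
    and "G CARD('n) = P"
    and "\<forall>i\<in>{1..CARD('n)}. G (i - 1) = max_face (G i) (signed_inv_basis \<sigma> i)"
  shows "\<exists>v. G 0 = {v} \<and> v extreme_point_of P \<and>
           {w. w extreme_point_of P \<and>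
               (\<forall>u. u extreme_point_of P \<longrightarrow> x_sigma \<alpha> \<sigma> \<bullet> u \<le> x_sigma \<alpha> \<sigma> \<bullet> w)} = {v}"
proof -
  have "polytope P" and lattice: "\<forall>u. u extreme_point_of P \<longrightarrow> (\<forall>i. u $ i \<in> \<int>)"
    using assms(1) by (simp_all add: lattice_polytope_def)
  then have G0: "G 0 face_of P" "G 0 \<noteq> {}"
    using flag_face_of[OF polytope_imp_compact polytope_imp_convex assms(2,6,7), of 0] by simp_all
  have "x = y" if "x \<in> G 0" "y \<in> G 0" for x y
    using signed_inv_basis_inner_eq_imp_eq[OF assms(4)] flag_bottom_inner_eq[OF assms(7) _ that]
    by blast
  with G0(2) obtain v where v: "G 0 = {v}"
    by blast
  with G0(1) have "v extreme_point_of P"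
    by (simp add: face_of_singleton)
  have less: "x_sigma \<alpha> \<sigma> \<bullet> u < x_sigma \<alpha> \<sigma> \<bullet> v" if "u extreme_point_of P" "u \<noteq> v" for u
    using flag_bottom_x_sigma_less[OF assms(4-7)] that v lattice assms(3)
      \<open>v extreme_point_of P\<close> by (simp add: extreme_point_of_def)
  have "{w. w extreme_point_of P \<and> (\<forall>u. u extreme_point_of P \<longrightarrow> x_sigma \<alpha> \<sigma> \<bullet> u \<le> x_sigma \<alpha> \<sigma> \<bullet> w)} = {v}"
    using \<open>v extreme_point_of P\<close> less by (auto simp: less_le_not_le)
  with v \<open>v extreme_point_of P\<close> show ?thesis
    by blast
qed

end
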